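(* Let $G$ be an arithmetic semigroup satisfying $N_G(x)=Ax+\mathcal{O}\!\left(\frac{x}{\log^\gamma x}\right)$ with $1<\gamma\le2$ and $A\in\mathbb{R}$, and let $\zeta=\zeta_G$. Then: (1) if $\gamma<2$ is fixed, $\zeta(1+\mathrm{i}t)\ll t^{1/\gamma}$ for $t>1$; (2) if $\gamma=2$, $\zeta(1+\mathrm{i}t)\ll\sqrt{t\log t}$ for $t>1$.
   Context: An arithmetic semigroup is a commutative semigroup $(G,\cdot)$ with identity together with a multiplicative norm $\|\cdot\|\colon G\to[1,\infty)$ such that $N_G(x)=|\{g\in G:\|g\|\le x\}|$ is finite for every $x$, the identity is the unique element of norm $1$, and decomposition into irreducible elements is unique. Its zeta function is $\zeta_G(s)=\sum_{g\in G}\|g\|^{-s}$ for $\Re s>1$; for $t\neq0$ the value $\zeta_G(1+\mathrm{i}t)$ denotes the boundary value $\lim_{\sigma\to1^+}\zeta_G(\sigma+\mathrm{i}t)$ (which exists under the hypothesis). *)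

theory Defs
  imports "HOL-Analysis.Analysis" "HOL-Library.Landau_Symbols" "HOL-Library.Multiset"
begin

text \<open>An arithmetic semigroup: the commutative monoid is the whole type 'a
  (with identity 1), together with a norm function nrm.\<close>

definition arith_irred :: "'a::comm_monoid_mult \<Rightarrow> bool" where
  "arith_irred p \<longleftrightarrow> p \<noteq> 1 \<and> (\<forall>a b. p = a * b \<longrightarrow> a = 1 \<or> b = 1)"

definition arith_semigroup :: "('a::comm_monoid_mult \<Rightarrow> real) \<Rightarrow> bool" where
  "arith_semigroup nrm \<longleftrightarrow>
     (\<forall>g h. nrm (g * h) = nrm g * nrm h) \<and>
     (\<forall>g. nrm g \<ge> 1) \<and>
     (\<forall>g. nrm g = 1 \<longleftrightarrow> g = 1) \<and>
     (\<forall>x::real. finite {g. nrm g \<le> x}) \<and>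
     (\<forall>g. \<exists>!M::'a multiset. (\<forall>p\<in>#M. arith_irred p) \<and> prod_mset M = g)"

definition count_G :: "('a \<Rightarrow> real) \<Rightarrow> real \<Rightarrow> real" where
  "count_G nrm x = real (card {g. nrm g \<le> x})"

text \<open>Zeta function for Re s > 1.\<close>
definition zeta_G :: "('a \<Rightarrow> real) \<Rightarrow> complex \<Rightarrow> complex" where
  "zeta_G nrm s = (\<Sum>\<^sub>\<infinity>g. complex_of_real (nrm g) powr (- s))"

definition zeta_G_line :: "('a \<Rightarrow> real) \<Rightarrow> real \<Rightarrow> complex" where
  "zeta_G_line nrm t = Lim (at_right 1) (\<lambda>\<sigma>. zeta_G nrm (Complex \<sigma> t))"

end

theory Submission
  imports Defs "HOL-Complex_Analysis.Cauchy_Integral_Theorem" "HOL-Real_Asymp.Real_Asymp"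
begin

text \<open>
  Write N(x) = A x + R(x) with |R(x)| <= C x / (ln x) powr gamma for x >= x0. Partial summation
  against N gives, for Re s > 1 and every X >= x0,
    zeta(s) = sum_{|g| <= X} |g| powr -s - N(X) X powr -s + A s X powr (1 - s) / (s - 1)
              + s * integral_X^oo R(x) x powr (-s - 1) dx,
  and by dominated convergence the right-hand side is continuous up to the line Re s = 1 away
  from s = 1, so it also computes zeta(1 + i t). On that line N(x) = O(x) makes the finite sum
  O(ln X) (partial summation once more), the two middle terms are O(1), and the integral is
  O(t (ln X) powr (1 - gamma)). Choosing ln X = t powr (1 / gamma) balances the first and the
  last term and yields zeta(1 + i t) = O(t powr (1 / gamma)) for every gamma > 1; for gamma = 2
  this is stronger than the bound O(sqrt (t ln t)) that is claimed.
\<close>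

section \<open>Powers of positive reals and elementary integrals\<close>

lemma borel_measurable_of_real_powr [measurable]:
  "(\<lambda>x::real. complex_of_real x powr s) \<in> borel_measurable borel"
  unfolding powr_def by measurable

lemma norm_of_real_powr: "0 \<le> x \<Longrightarrow> norm (complex_of_real x powr s) = x powr Re s"
  by (simp add: norm_powr_real_powr)

lemma has_vector_derivative_of_real_powr:
  assumes "0 < x"
  shows "((\<lambda>y. complex_of_real y powr s) has_vector_derivative s * complex_of_real x powr (s - 1))
           (at x within S)"
proof -
  have "complex_of_real x \<notin> \<real>\<^sub>\<le>\<^sub>0"
    using assms by (auto simp: nonpos_Reals_def)
  from has_field_derivative_powr[OF this, of s] show ?thesis
    by (rule has_vector_derivative_real_field)
qed

lemma continuous_on_of_real_powr:
  "A \<subseteq> {0<..} \<Longrightarrow> continuous_on A (\<lambda>x. complex_of_real x powr s)"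
  using has_vector_derivative_continuous[OF has_vector_derivative_of_real_powr]
  by (intro continuous_at_imp_continuous_on) auto

lemma set_integral_of_real_powr_Icc:
  assumes "0 < a" "a \<le> b"
  shows "(LINT x:{a..b}|lborel. s * complex_of_real x powr (- s - 1)) =
           complex_of_real a powr (- s) - complex_of_real b powr (- s)"
proof -
  have "(LINT x:{a..b}|lborel. s * complex_of_real x powr (- s - 1)) =
          - (complex_of_real b powr (- s)) - - (complex_of_real a powr (- s))"
    unfolding set_lebesgue_integral_def
  proof (rule integral_FTC_atLeastAtMost[OF assms(2)])
    fix x assume "a \<le> x" "x \<le> b"
    with assms have "0 < x" by simp
    from has_vector_derivative_minus[OF has_vector_derivative_of_real_powr[OF this, of "- s"]]
    show "((\<lambda>x. - (complex_of_real x powr (- s))) has_vector_derivative s * complex_of_real x powr (- s - 1))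
            (at x within {a..b})"
      by simp
  qed (use assms in \<open>intro continuous_intros continuous_on_of_real_powr, auto\<close>)
  then show ?thesis by simp
qed

lemma set_integral_powr_Icc:
  fixes a b r :: real
  assumes "0 < a" "a \<le> b" "r \<noteq> -1"
  shows "(LINT x:{a..b}|lborel. x powr r) = (b powr (r + 1) - a powr (r + 1)) / (r + 1)"
  unfolding set_lebesgue_integral_def diff_divide_distrib
proof (rule integral_FTC_atLeastAtMost[OF assms(2)])
  fix x assume "a \<le> x" "x \<le> b"
  with assms have "0 < x" by simp
  with assms(3) have "((\<lambda>x. x powr (r + 1) / (r + 1)) has_real_derivative x powr r) (at x)"
    by (auto intro!: derivative_eq_intros)
  then show "((\<lambda>x. x powr (r + 1) / (r + 1)) has_vector_derivative x powr r) (at x within {a..b})"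
    by (simp add: has_real_derivative_iff_has_vector_derivative[symmetric] has_field_derivative_at_within)
qed (use assms in \<open>intro continuous_intros, auto\<close>)

lemma set_integral_neg_powr_le:
  fixes \<sigma> Y :: real
  assumes "1 < \<sigma>" "1 \<le> Y"
  shows "(LINT x:{1..Y}|lborel. x powr (- \<sigma>)) \<le> 1 / (\<sigma> - 1)"
proof -
  have "(LINT x:{1..Y}|lborel. x powr (- \<sigma>)) = (1 - Y powr (1 - \<sigma>)) / (\<sigma> - 1)"
    using set_integral_powr_Icc[of 1 Y "- \<sigma>"] assms by (simp add: field_simps)
  also have "\<dots> \<le> 1 / (\<sigma> - 1)"
    using assms by (intro divide_right_mono) auto
  finally show ?thesis .
qed

lemma set_integral_inverse_Icc:
  fixes a b :: real
  assumes "0 < a" "a \<le> b"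
  shows "(LINT x:{a..b}|lborel. x powr (- 1)) = ln b - ln a"
  unfolding set_lebesgue_integral_def
proof (rule integral_FTC_atLeastAtMost[OF assms(2)])
  fix x assume "a \<le> x" "x \<le> b"
  with assms have "0 < x" by simp
  then show "(ln has_vector_derivative x powr (- 1)) (at x within {a..b})"
    by (auto intro!: derivative_eq_intros simp: powr_minus_divide
        has_real_derivative_iff_has_vector_derivative[symmetric])
qed (use assms in \<open>intro continuous_intros, auto\<close>)

lemma set_integral_inverse_mult_ln_powr:
  fixes \<gamma> X :: real
  assumes "1 < \<gamma>" "1 < X"
  shows "set_integrable lborel {X..} (\<lambda>x. 1 / (x * ln x powr \<gamma>))"
    and "(LINT x:{X..}|lborel. 1 / (x * ln x powr \<gamma>)) = ln X powr (1 - \<gamma>) / (\<gamma> - 1)"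
proof -
  define f where "f x = 1 / (x * ln x powr \<gamma>)" for x :: real
  define F where "F x = - (ln x powr (1 - \<gamma>)) / (\<gamma> - 1)" for x :: real
  have f_meas: "f \<in> borel_measurable borel"
    unfolding f_def by measurable
  have f_nonneg: "0 \<le> f x" if "X \<le> x" for x
    unfolding f_def using that assms by auto
  have F_deriv: "(F has_real_derivative f x) (at x)" if "X \<le> x" for x
  proof -
    from that assms have x: "1 < x" "0 < ln x" by simp_all
    then have "(F has_real_derivative - ((1 - \<gamma>) * ln x powr (1 - \<gamma> - 1) * (1 / x)) / (\<gamma> - 1)) (at x)"
      unfolding F_def using assms(1) by (auto intro!: derivative_eq_intros)
    also have "- ((1 - \<gamma>) * ln x powr (1 - \<gamma> - 1) * (1 / x)) / (\<gamma> - 1) = f x"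
      using x assms(1) unfolding f_def by (simp add: powr_minus field_simps powr_diff)
    finally show ?thesis .
  qed
  have "((\<lambda>x. ln x powr (1 - \<gamma>)) \<longlongrightarrow> 0) at_top"
    using assms by (intro tendsto_neg_powr ln_at_top) auto
  then have "((\<lambda>x. - (ln x powr (1 - \<gamma>)) / (\<gamma> - 1)) \<longlongrightarrow> - 0 / (\<gamma> - 1)) at_top"
    using assms(1) by (intro tendsto_intros) auto
  then have F_lim: "(F \<longlongrightarrow> 0) at_top"
    unfolding F_def by simp
  have nn: "(\<integral>\<^sup>+x. ennreal (f x) * indicator {X..} x \<partial>lborel) = 0 - F X"
    by (rule nn_integral_FTC_atLeast[OF f_meas F_deriv f_nonneg F_lim])
  have nn': "(\<integral>\<^sup>+x. ennreal (indicator {X..} x *\<^sub>R f x) \<partial>lborel) = 0 - F X"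
    by (subst nn[symmetric], intro nn_integral_cong) (auto simp: indicator_def)
  have meas: "(\<lambda>x. indicator {X..} x *\<^sub>R f x) \<in> borel_measurable lborel"
    using f_meas by simp
  have nonneg: "AE x in lborel. 0 \<le> indicator {X..} x *\<^sub>R f x"
    using f_nonneg by (auto simp: indicator_def)
  show "set_integrable lborel {X..} (\<lambda>x. 1 / (x * ln x powr \<gamma>))"
    unfolding set_integrable_def f_def[symmetric]
    by (rule integrableI_nonneg[OF meas nonneg]) (use nn' in simp)
  show "(LINT x:{X..}|lborel. 1 / (x * ln x powr \<gamma>)) = ln X powr (1 - \<gamma>) / (\<gamma> - 1)"
    unfolding set_lebesgue_integral_def f_def[symmetric]
    using assms nn' by (subst integral_eq_nn_integral[OF meas nonneg]) (simp add: F_def)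
qed

lemma set_integrable_Icc_bounded_mult_continuous:
  fixes f :: "real \<Rightarrow> real" and g :: "real \<Rightarrow> complex"
  assumes "f \<in> borel_measurable borel" "g \<in> borel_measurable borel"
    and "\<And>x. a \<le> x \<Longrightarrow> x \<le> b \<Longrightarrow> \<bar>f x\<bar> \<le> B" and "continuous_on {a..b} g"
  shows "set_integrable lborel {a..b} (\<lambda>x. complex_of_real (f x) * g x)"
proof -
  from compact_imp_bounded[OF compact_continuous_image[OF assms(4) compact_Icc]]
  obtain M where M: "\<And>x. x \<in> {a..b} \<Longrightarrow> norm (g x) \<le> M"
    unfolding bounded_iff by blast
  have "norm (complex_of_real (f x) * g x) \<le> B * M" if "x \<in> {a..b}" for x
    using assms(3)[of x] M[of x] that
    by (auto simp: norm_mult intro!: mult_mono')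
  then show ?thesis
    unfolding set_integrable_def using assms(1,2)
    by (intro integrableI_bounded_set_indicator[where B = "B * M"])
       (auto simp: emeasure_lborel_Icc_eq)
qed

section \<open>Partial summation against the counting function\<close>

locale norm_counting =
  fixes nrm :: "'a \<Rightarrow> real"
  assumes norm_ge_1: "nrm g \<ge> 1"
    and finite_norm_le: "finite {g. nrm g \<le> x}"
begin

abbreviation N :: "real \<Rightarrow> real" where
  "N \<equiv> count_G nrm"

lemma norm_pos: "0 < nrm g"
  using norm_ge_1[of g] by linarith

lemma count_nonneg: "0 \<le> N x"
  unfolding count_G_def by simp

lemma count_mono: "x \<le> y \<Longrightarrow> N x \<le> N y"
  unfolding count_G_def by (intro of_nat_mono card_mono finite_norm_le) auto

lemma count_eq_0:
  assumes "x < 1"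
  shows "N x = 0"
proof -
  have "\<not> nrm g \<le> x" for g
    using norm_ge_1[of g] assms by linarith
  then show ?thesis
    unfolding count_G_def by simp
qed

lemma borel_measurable_count [measurable]: "N \<in> borel_measurable borel"
  by (rule borel_measurable_mono) (auto simp: mono_def count_mono)

lemma finite_norm_between: "finite {g. X < nrm g \<and> nrm g \<le> Y}"
  by (rule finite_subset[OF _ finite_norm_le[of Y]]) auto

lemma norm_le_split:
  "X \<le> Y \<Longrightarrow> {g. nrm g \<le> Y} = {g. nrm g \<le> X} \<union> {g. X < nrm g \<and> nrm g \<le> Y}"
  by auto

lemma sum_norm_le_split:
  assumes "X \<le> Y"
  shows "(\<Sum>g | nrm g \<le> Y. f g) = (\<Sum>g | nrm g \<le> X. f g) + (\<Sum>g | X < nrm g \<and> nrm g \<le> Y. f g)"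
  unfolding norm_le_split[OF assms]
  by (rule sum.union_disjoint[OF finite_norm_le finite_norm_between]) auto

lemma count_diff_eq_card:
  assumes "X \<le> Y"
  shows "N Y - N X = card {g. X < nrm g \<and> nrm g \<le> Y}"
proof -
  have "card {g. nrm g \<le> Y} = card {g. nrm g \<le> X} + card {g. X < nrm g \<and> nrm g \<le> Y}"
    unfolding norm_le_split[OF assms]
    by (rule card_Un_disjoint[OF finite_norm_le finite_norm_between]) auto
  then show ?thesis
    unfolding count_G_def by simp
qed

text \<open>Exchanging sum and integral: for X <= x <= Y exactly N x - N X of the intervals
  [nrm g, Y] with X < nrm g contain x.\<close>

lemma sum_set_integral_norm_between:
  fixes f :: "real \<Rightarrow> complex"
  assumes "X \<le> Y" "set_integrable lborel {X..Y} f"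
  shows "(\<Sum>g | X < nrm g \<and> nrm g \<le> Y. (LINT x:{nrm g..Y}|lborel. f x)) =
           (LINT x:{X..Y}|lborel. complex_of_real (N x - N X) * f x)"
proof -
  define S where "S = {g. X < nrm g \<and> nrm g \<le> Y}"
  have "(\<Sum>g\<in>S. (LINT x:{nrm g..Y}|lborel. f x)) =
          integral\<^sup>L lborel (\<lambda>x. \<Sum>g\<in>S. indicator {nrm g..Y} x *\<^sub>R f x)"
    unfolding set_lebesgue_integral_def using assms(2)
    by (subst Bochner_Integration.integral_sum)
       (auto simp: S_def set_integrable_def[symmetric] intro: set_integrable_subset)
  also have "(\<lambda>x. \<Sum>g\<in>S. indicator {nrm g..Y} x *\<^sub>R f x) =
               (\<lambda>x. indicator {X..Y} x *\<^sub>R (complex_of_real (N x - N X) * f x))"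
  proof
    fix x
    show "(\<Sum>g\<in>S. indicator {nrm g..Y} x *\<^sub>R f x) =
            indicator {X..Y} x *\<^sub>R (complex_of_real (N x - N X) * f x)"
    proof (cases "X \<le> x \<and> x \<le> Y")
      case True
      have "(\<Sum>g\<in>S. indicator {nrm g..Y} x :: real) = real (card (S \<inter> {g. x \<in> {nrm g..Y}}))"
        unfolding indicator_def S_def by (simp add: finite_norm_between)
      also have "S \<inter> {g. x \<in> {nrm g..Y}} = {g. X < nrm g \<and> nrm g \<le> x}"
        using True unfolding S_def by auto
      also have "real (card {g. X < nrm g \<and> nrm g \<le> x}) = N x - N X"
        using True by (simp add: count_diff_eq_card)
      finally show ?thesis
        using True by (simp only: scaleR_sum_left[symmetric]) (simp add: scaleR_conv_of_real)
    next
      case False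
      then have "indicator {nrm g..Y} x = (0::real)" if "g \<in> S" for g
        using that unfolding S_def by auto
      then show ?thesis
        using False by simp
    qed
  qed
  finally show ?thesis
    unfolding S_def set_lebesgue_integral_def .
qed

text \<open>Partial summation, starting from nrm g powr -s = Y powr -s + integral over [nrm g, Y]
  of s x powr (-s - 1).\<close>

lemma sum_norm_between_powr_eq:
  assumes "0 < X" "X \<le> Y"
  shows "(\<Sum>g | X < nrm g \<and> nrm g \<le> Y. complex_of_real (nrm g) powr (- s)) =
           complex_of_real (N Y) * complex_of_real Y powr (- s)
         - complex_of_real (N X) * complex_of_real X powr (- s)
         + (LINT x:{X..Y}|lborel. complex_of_real (N x) * (s * complex_of_real x powr (- s - 1)))"
proof -
  define f where "f x = s * complex_of_real x powr (- s - 1)" for x :: real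
  have f_int: "set_integrable lborel {X..Y} f"
    unfolding f_def using assms(1)
    by (intro borel_integrable_atLeastAtMost' continuous_intros continuous_on_of_real_powr) auto
  have Nf_int: "set_integrable lborel {X..Y} (\<lambda>x. complex_of_real (N x) * f x)"
    unfolding f_def using assms(1) count_nonneg count_mono
    by (intro set_integrable_Icc_bounded_mult_continuous[where B = "N Y"] continuous_intros
        continuous_on_of_real_powr) auto
  have "(\<Sum>g | X < nrm g \<and> nrm g \<le> Y. complex_of_real (nrm g) powr (- s)) =
          (\<Sum>g | X < nrm g \<and> nrm g \<le> Y. complex_of_real Y powr (- s) + (LINT x:{nrm g..Y}|lborel. f x))"
  proof (rule sum.cong[OF refl])
    fix g
    assume "g \<in> {g. X < nrm g \<and> nrm g \<le> Y}"
    with assms(1) show "complex_of_real (nrm g) powr (- s) =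
                          complex_of_real Y powr (- s) + (LINT x:{nrm g..Y}|lborel. f x)"
      using set_integral_of_real_powr_Icc[of "nrm g" Y s] unfolding f_def by simp
  qed
  also have "\<dots> = complex_of_real (N Y - N X) * complex_of_real Y powr (- s)
                   + (LINT x:{X..Y}|lborel. complex_of_real (N x - N X) * f x)"
    using assms(2) f_int by (simp add: sum.distrib sum_set_integral_norm_between count_diff_eq_card)
  also have "(LINT x:{X..Y}|lborel. complex_of_real (N x - N X) * f x) =
               (LINT x:{X..Y}|lborel. complex_of_real (N x) * f x - complex_of_real (N X) * f x)"
    by (simp add: algebra_simps)
  also have "\<dots> = (LINT x:{X..Y}|lborel. complex_of_real (N x) * f x)
                   - complex_of_real (N X) * (LINT x:{X..Y}|lborel. f x)"
    using Nf_int f_int by simp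
  also have "(LINT x:{X..Y}|lborel. f x) = complex_of_real X powr (- s) - complex_of_real Y powr (- s)"
    unfolding f_def using assms by (rule set_integral_of_real_powr_Icc)
  finally show ?thesis
    unfolding f_def by (simp add: algebra_simps)
qed

lemma norm_le_tendsto_finite_subsets:
  "filterlim (\<lambda>Y. {g. nrm g \<le> Y}) (finite_subsets_at_top UNIV) at_top"
  unfolding filterlim_finite_subsets_at_top
proof (intro allI impI)
  fix F :: "'a set"
  assume F: "finite F \<and> F \<subseteq> UNIV"
  have "\<forall>\<^sub>F Y in at_top. F \<subseteq> {g. nrm g \<le> Y}"
    using eventually_ge_at_top[of "Max (insert 0 (nrm ` F))"]
  proof eventually_elim
    case (elim Y)
    with F show ?case
      by (auto intro: order.trans[OF Max_ge])
  qed
  then show "\<forall>\<^sub>F Y in at_top. finite {g. nrm g \<le> Y} \<and> F \<subseteq> {g. nrm g \<le> Y} \<and> {g. nrm g \<le> Y} \<subseteq> UNIV"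
    using finite_norm_le by simp
qed

end

locale count_asymptotics = norm_counting nrm for nrm :: "'a \<Rightarrow> real" +
  fixes A C \<gamma> x0 :: real
  assumes gamma_gt_1: "1 < \<gamma>"
    and x0_ge_3: "3 \<le> x0" \<comment> \<open>so that ln x >= 1 for x >= x0\<close>
    and C_nonneg: "0 \<le> C"
    and remainder_le: "\<And>x. x0 \<le> x \<Longrightarrow> \<bar>count_G nrm x - A * x\<bar> \<le> C * x / ln x powr \<gamma>"
begin

definition R :: "real \<Rightarrow> real" where
  "R x = N x - A * x"

definition count_slope :: real where
  "count_slope = \<bar>A\<bar> + C + N x0"

lemma borel_measurable_R [measurable]: "R \<in> borel_measurable borel"
  unfolding R_def by measurable

lemma count_slope_nonneg: "0 \<le> count_slope"
  unfolding count_slope_def using C_nonneg count_nonneg[of x0] by simp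

lemma ln_ge_1: "x0 \<le> x \<Longrightarrow> 1 \<le> ln x"
  using exp_le x0_ge_3 by (subst ln_ge_iff) auto

lemma ln_powr_ge_1: "x0 \<le> x \<Longrightarrow> 1 \<le> ln x powr \<gamma>"
  using ln_ge_1 gamma_gt_1 by (simp add: ge_one_powr_ge_zero)

lemma count_le_linear:
  assumes "0 < x"
  shows "N x \<le> count_slope * x"
proof -
  consider "x < 1" | "1 \<le> x" "x \<le> x0" | "x0 \<le> x"
    by linarith
  then show ?thesis
  proof cases
    case 1
    then show ?thesis
      using count_eq_0 count_slope_nonneg assms by simp
  next
    case 2
    then have "N x0 \<le> N x0 * x"
      using count_nonneg[of x0] by (simp add: mult_le_cancel_left1)
    then have "N x \<le> N x0 * x"
      using count_mono[OF 2(2)] by linarith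
    also have "\<dots> \<le> count_slope * x"
      unfolding count_slope_def using 2 C_nonneg by (intro mult_right_mono) auto
    finally show ?thesis .
  next
    case 3
    have "C * x / ln x powr \<gamma> \<le> C * x / 1"
      using assms C_nonneg ln_powr_ge_1[OF 3] by (intro divide_left_mono) auto
    then have "N x \<le> \<bar>A\<bar> * x + C * x"
      using remainder_le[OF 3] assms abs_ge_self[of A] mult_right_mono[of A "\<bar>A\<bar>" x] by linarith
    moreover have "0 \<le> N x0 * x"
      using assms count_nonneg[of x0] by simp
    ultimately show ?thesis
      unfolding count_slope_def by (simp only: distrib_right)
  qed
qed

lemma norm_count_mult_powr_le:
  assumes "0 < Y"
  shows "norm (complex_of_real (N Y) * complex_of_real Y powr (- s)) \<le> count_slope * Y powr (1 - Re s)"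
proof -
  have "norm (complex_of_real (N Y) * complex_of_real Y powr (- s)) = N Y * Y powr (- Re s)"
    using assms count_nonneg[of Y] by (simp add: norm_mult norm_of_real_powr)
  also have "\<dots> \<le> count_slope * Y * Y powr (- Re s)"
    using count_le_linear[OF assms] by (intro mult_right_mono) auto
  also have "\<dots> = count_slope * Y powr (1 - Re s)"
    using assms by (simp add: powr_diff powr_minus field_simps)
  finally show ?thesis .
qed

lemma norm_count_mult_powr_le_slope:
  assumes "1 \<le> Y" "1 \<le> Re s"
  shows "norm (complex_of_real (N Y) * complex_of_real Y powr (- s)) \<le> count_slope"
proof -
  have "count_slope * Y powr (1 - Re s) \<le> count_slope * 1"
    using assms count_slope_nonneg powr_mono[of "1 - Re s" 0 Y] by (intro mult_left_mono) auto
  with norm_count_mult_powr_le[of Y s] assms(1) show ?thesis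
    by simp
qed

lemma norm_count_integral_le:
  assumes "1 \<le> Y"
  shows "norm (LINT x:{1..Y}|lborel. complex_of_real (N x) * (s * complex_of_real x powr (- s - 1)))
           \<le> count_slope * norm s * (LINT x:{1..Y}|lborel. x powr (- Re s))"
proof -
  have int: "set_integrable lborel {1..Y} (\<lambda>x. complex_of_real (N x) * (s * complex_of_real x powr (- s - 1)))"
    using count_nonneg count_mono
    by (intro set_integrable_Icc_bounded_mult_continuous[where B = "N Y"] continuous_intros
        continuous_on_of_real_powr) auto
  have "norm (LINT x:{1..Y}|lborel. complex_of_real (N x) * (s * complex_of_real x powr (- s - 1)))
          \<le> (LINT x:{1..Y}|lborel. norm (complex_of_real (N x) * (s * complex_of_real x powr (- s - 1))))"
    by (rule set_integral_norm_bound[OF int])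
  also have "\<dots> \<le> (LINT x:{1..Y}|lborel. count_slope * norm s * x powr (- Re s))"
  proof (rule set_integral_mono)
    fix x :: real
    assume "x \<in> {1..Y}"
    then have x: "0 < x" by simp
    have "norm (complex_of_real (N x) * (s * complex_of_real x powr (- s - 1))) =
            N x * (norm s * x powr (- Re s - 1))"
      using x count_nonneg[of x] by (simp add: norm_mult norm_of_real_powr)
    also have "\<dots> \<le> (count_slope * x) * (norm s * x powr (- Re s - 1))"
      using count_le_linear[OF x] by (intro mult_right_mono) auto
    also have "\<dots> = count_slope * norm s * x powr (- Re s)"
      using x by (simp add: powr_diff powr_minus field_simps)
    finally show "norm (complex_of_real (N x) * (s * complex_of_real x powr (- s - 1)))
                    \<le> count_slope * norm s * x powr (- Re s)" .
  next
    show "set_integrable lborel {1..Y} (\<lambda>x. count_slope * norm s * x powr (- Re s))"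
      by (intro borel_integrable_atLeastAtMost' continuous_intros) auto
  qed (use int in \<open>rule set_integrable_norm\<close>)
  finally show ?thesis
    by simp
qed

lemma sum_norm_le_powr_le:
  assumes "1 \<le> \<sigma>" "1 \<le> Y"
  shows "(\<Sum>g | nrm g \<le> Y. nrm g powr (- \<sigma>))
           \<le> 2 * N 1 + count_slope + count_slope * \<sigma> * (LINT x:{1..Y}|lborel. x powr (- \<sigma>))"
proof -
  define s where "s = complex_of_real \<sigma>"
  have "nrm g powr (- \<sigma>) = 1" if "nrm g \<le> 1" for g
    using order_antisym[OF that norm_ge_1] by simp
  then have unit_part: "(\<Sum>g | nrm g \<le> 1. nrm g powr (- \<sigma>)) = N 1"
    unfolding count_G_def by simp
  have real_sum: "(\<Sum>g | 1 < nrm g \<and> nrm g \<le> Y. complex_of_real (nrm g) powr (- s))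
                   = complex_of_real (\<Sum>g | 1 < nrm g \<and> nrm g \<le> Y. nrm g powr (- \<sigma>))"
    unfolding s_def of_real_sum using norm_pos
    by (intro sum.cong refl) (simp add: less_imp_le powr_of_real[symmetric])
  have "0 \<le> (\<Sum>g | 1 < nrm g \<and> nrm g \<le> Y. nrm g powr (- \<sigma>))"
    by (intro sum_nonneg) simp
  then have "(\<Sum>g | 1 < nrm g \<and> nrm g \<le> Y. nrm g powr (- \<sigma>))
               = norm (\<Sum>g | 1 < nrm g \<and> nrm g \<le> Y. complex_of_real (nrm g) powr (- s))"
    unfolding real_sum norm_of_real by simp
  also have "\<dots> = norm (complex_of_real (N Y) * complex_of_real Y powr (- s) - complex_of_real (N 1)
                   + (LINT x:{1..Y}|lborel. complex_of_real (N x) * (s * complex_of_real x powr (- s - 1))))"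
    using sum_norm_between_powr_eq[of 1 Y s] assms by simp
  also have "\<dots> \<le> norm (complex_of_real (N Y) * complex_of_real Y powr (- s)) + norm (complex_of_real (N 1))
                   + norm (LINT x:{1..Y}|lborel. complex_of_real (N x) * (s * complex_of_real x powr (- s - 1)))"
    by (rule order.trans[OF norm_triangle_ineq add_right_mono[OF norm_triangle_ineq4]])
  also have "\<dots> \<le> count_slope + N 1 + count_slope * \<sigma> * (LINT x:{1..Y}|lborel. x powr (- \<sigma>))"
  proof (intro add_mono)
    show "norm (complex_of_real (N Y) * complex_of_real Y powr (- s)) \<le> count_slope"
      using assms by (intro norm_count_mult_powr_le_slope) (simp_all add: s_def)
    show "norm (complex_of_real (N 1)) \<le> N 1"
      using count_nonneg[of 1] by simp
    show "norm (LINT x:{1..Y}|lborel. complex_of_real (N x) * (s * complex_of_real x powr (- s - 1)))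
            \<le> count_slope * \<sigma> * (LINT x:{1..Y}|lborel. x powr (- \<sigma>))"
      using norm_count_integral_le[OF assms(2), of s] assms by (simp add: s_def)
  qed
  finally show ?thesis
    using sum_norm_le_split[OF assms(2), of "\<lambda>g. nrm g powr (- \<sigma>)"] unit_part by linarith
qed

lemma summable_on_norm_powr:
  assumes "1 < Re s"
  shows "(\<lambda>g. complex_of_real (nrm g) powr (- s)) summable_on UNIV"
proof (rule abs_summable_summable)
  define K where "K = 2 * N 1 + count_slope + count_slope * Re s * (1 / (Re s - 1))"
  have "(\<lambda>g. nrm g powr (- Re s)) summable_on UNIV"
  proof (rule nonneg_bdd_above_summable_on)
    show "bdd_above (sum (\<lambda>g. nrm g powr (- Re s)) ` {F. F \<subseteq> UNIV \<and> finite F})"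
    proof (rule bdd_aboveI2)
      fix F :: "'a set"
      assume "F \<in> {F. F \<subseteq> UNIV \<and> finite F}"
      then have "finite (insert 1 (nrm ` F))"
        by simp
      define Y where "Y = Max (insert 1 (nrm ` F))"
      have Y: "1 \<le> Y" "F \<subseteq> {g. nrm g \<le> Y}"
        unfolding Y_def using Max_ge[OF \<open>finite (insert 1 (nrm ` F))\<close>] by auto
      have "count_slope * Re s * (LINT x:{1..Y}|lborel. x powr (- Re s))
              \<le> count_slope * Re s * (1 / (Re s - 1))"
        using assms Y count_slope_nonneg by (intro mult_left_mono set_integral_neg_powr_le) auto
      moreover have "sum (\<lambda>g. nrm g powr (- Re s)) F \<le> (\<Sum>g | nrm g \<le> Y. nrm g powr (- Re s))"
        using Y by (intro sum_mono2 finite_norm_le) auto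
      moreover have "(\<Sum>g | nrm g \<le> Y. nrm g powr (- Re s))
                       \<le> 2 * N 1 + count_slope + count_slope * Re s * (LINT x:{1..Y}|lborel. x powr (- Re s))"
        using sum_norm_le_powr_le[OF _ Y(1), of "Re s"] assms by simp
      ultimately show "sum (\<lambda>g. nrm g powr (- Re s)) F \<le> K"
        unfolding K_def by linarith
    qed
  qed simp
  moreover have "norm (complex_of_real (nrm g) powr (- s)) = nrm g powr (- Re s)" for g
    using norm_of_real_powr[OF less_imp_le[OF norm_pos]] by simp
  ultimately show "(\<lambda>g. norm (complex_of_real (nrm g) powr (- s))) summable_on UNIV"
    by simp
qed

lemma norm_remainder_integrand_le:
  assumes "x0 \<le> x" "1 \<le> Re s"
  shows "norm (complex_of_real (R x) * (s * complex_of_real x powr (- s - 1)))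
           \<le> norm s * C * (1 / (x * ln x powr \<gamma>))"
proof -
  have x: "1 \<le> x" "0 < ln x powr \<gamma>"
    using assms(1) x0_ge_3 ln_powr_ge_1[OF assms(1)] by auto
  have power_le: "norm (complex_of_real x powr (- s - 1)) \<le> x powr (- 2)"
    using x assms(2) by (simp add: norm_of_real_powr powr_mono)
  have "norm (complex_of_real (R x) * (s * complex_of_real x powr (- s - 1)))
          = \<bar>R x\<bar> * norm s * norm (complex_of_real x powr (- s - 1))"
    by (simp add: norm_mult)
  also have "\<dots> \<le> (C * x / ln x powr \<gamma>) * norm s * x powr (- 2)"
    using x C_nonneg
    by (intro mult_mono mult_right_mono remainder_le[OF assms(1), folded R_def] power_le) auto
  also have "\<dots> = norm s * C * (1 / (x * ln x powr \<gamma>))"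
    using x by (simp add: powr_minus power2_eq_square field_simps)
  finally show ?thesis .
qed

lemma remainder_tail_integral:
  assumes "x0 \<le> X" "1 \<le> Re s"
  shows "set_integrable lborel {X..} (\<lambda>x. complex_of_real (R x) * (s * complex_of_real x powr (- s - 1)))"
    and "norm (LINT x:{X..}|lborel. complex_of_real (R x) * (s * complex_of_real x powr (- s - 1)))
           \<le> norm s * C * (ln X powr (1 - \<gamma>) / (\<gamma> - 1))"
proof -
  have X: "1 < X"
    using assms(1) x0_ge_3 by simp
  have bound_int: "set_integrable lborel {X..} (\<lambda>x. norm s * C * (1 / (x * ln x powr \<gamma>)))"
    by (rule set_integrable_mult_right[OF set_integral_inverse_mult_ln_powr(1)[OF gamma_gt_1 X]])
  have bound: "norm (complex_of_real (R x) * (s * complex_of_real x powr (- s - 1)))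
                 \<le> norm s * C * (1 / (x * ln x powr \<gamma>))" if "x \<in> {X..}" for x
    using that assms by (intro norm_remainder_integrand_le) auto
  show int: "set_integrable lborel {X..} (\<lambda>x. complex_of_real (R x) * (s * complex_of_real x powr (- s - 1)))"
  proof (rule set_integrable_bound[OF bound_int])
    show "set_borel_measurable lborel {X..}
            (\<lambda>x. complex_of_real (R x) * (s * complex_of_real x powr (- s - 1)))"
      unfolding set_borel_measurable_def by measurable
    show "AE x in lborel. x \<in> {X..} \<longrightarrow>
            norm (complex_of_real (R x) * (s * complex_of_real x powr (- s - 1)))
              \<le> norm (norm s * C * (1 / (x * ln x powr \<gamma>)))"
      using bound by (intro AE_I2 impI) (metis abs_ge_self order.trans real_norm_def)
  qed
  have "norm (LINT x:{X..}|lborel. complex_of_real (R x) * (s * complex_of_real x powr (- s - 1)))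
          \<le> (LINT x:{X..}|lborel. norm (complex_of_real (R x) * (s * complex_of_real x powr (- s - 1))))"
    by (rule set_integral_norm_bound[OF int])
  also have "\<dots> \<le> (LINT x:{X..}|lborel. norm s * C * (1 / (x * ln x powr \<gamma>)))"
    using int bound_int bound by (intro set_integral_mono set_integrable_norm) auto
  also have "\<dots> = norm s * C * (ln X powr (1 - \<gamma>) / (\<gamma> - 1))"
    using set_integral_inverse_mult_ln_powr(2)[OF gamma_gt_1 X] by (simp only: set_integral_mult_right)
  finally show "norm (LINT x:{X..}|lborel. complex_of_real (R x) * (s * complex_of_real x powr (- s - 1)))
                  \<le> norm s * C * (ln X powr (1 - \<gamma>) / (\<gamma> - 1))" .
qed

lemma set_integrable_remainder_Icc:
  assumes "0 < X"
  shows "set_integrable lborel {X..Y} (\<lambda>x. complex_of_real (R x) * (s * complex_of_real x powr (- s - 1)))"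
proof (rule set_integrable_Icc_bounded_mult_continuous[where B = "N Y + \<bar>A\<bar> * Y"])
  show "continuous_on {X..Y} (\<lambda>x. s * complex_of_real x powr (- s - 1))"
    using assms by (intro continuous_intros continuous_on_of_real_powr) auto
next
  fix x
  assume x: "X \<le> x" "x \<le> Y"
  have "\<bar>R x\<bar> \<le> \<bar>N x\<bar> + \<bar>A * x\<bar>"
    unfolding R_def by (rule abs_triangle_ineq4)
  also have "\<dots> \<le> N Y + \<bar>A\<bar> * Y"
    using x assms count_mono[OF x(2)] count_nonneg[of x]
    by (intro add_mono) (auto simp: abs_mult intro: mult_left_mono)
  finally show "\<bar>R x\<bar> \<le> N Y + \<bar>A\<bar> * Y" .
qed measurable

lemma sum_norm_between_powr_remainder_eq:
  assumes "0 < X" "X \<le> Y" "s \<noteq> 1"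
  shows "(\<Sum>g | X < nrm g \<and> nrm g \<le> Y. complex_of_real (nrm g) powr (- s)) =
           complex_of_real (N Y) * complex_of_real Y powr (- s)
         - complex_of_real (N X) * complex_of_real X powr (- s)
         + complex_of_real A * s * (complex_of_real X powr (1 - s) - complex_of_real Y powr (1 - s)) / (s - 1)
         + (LINT x:{X..Y}|lborel. complex_of_real (R x) * (s * complex_of_real x powr (- s - 1)))"
proof -
  have split: "complex_of_real (N x) * (s * complex_of_real x powr (- s - 1)) =
                 complex_of_real (R x) * (s * complex_of_real x powr (- s - 1))
               + complex_of_real A * s * complex_of_real x powr (- s)" if "x \<in> {X..Y}" for x
  proof -
    from that assms(1) have "complex_of_real x powr (- s) = complex_of_real x * complex_of_real x powr (- s - 1)"
      by (simp add: powr_def exp_diff field_simps)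
    then show ?thesis
      unfolding R_def by (simp add: algebra_simps)
  qed
  have "(s - 1) * (LINT x:{X..Y}|lborel. complex_of_real x powr (- s))
          = complex_of_real X powr (1 - s) - complex_of_real Y powr (1 - s)"
    using set_integral_of_real_powr_Icc[OF assms(1,2), of "s - 1"] by simp
  then have power_integral: "(LINT x:{X..Y}|lborel. complex_of_real x powr (- s))
          = (complex_of_real X powr (1 - s) - complex_of_real Y powr (1 - s)) / (s - 1)"
    using assms(3) by (simp add: field_simps)
  have power_int: "set_integrable lborel {X..Y} (\<lambda>x. complex_of_real A * s * complex_of_real x powr (- s))"
    using assms(1) by (intro borel_integrable_atLeastAtMost' continuous_intros continuous_on_of_real_powr) auto
  have "(LINT x:{X..Y}|lborel. complex_of_real (N x) * (s * complex_of_real x powr (- s - 1)))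
          = (LINT x:{X..Y}|lborel. complex_of_real (R x) * (s * complex_of_real x powr (- s - 1))
                                  + complex_of_real A * s * complex_of_real x powr (- s))"
    using split by (intro set_lebesgue_integral_cong) auto
  also have "\<dots> = (LINT x:{X..Y}|lborel. complex_of_real (R x) * (s * complex_of_real x powr (- s - 1)))
                   + complex_of_real A * s * (LINT x:{X..Y}|lborel. complex_of_real x powr (- s))"
    using set_integrable_remainder_Icc[OF assms(1)] power_int by simp
  finally show ?thesis
    unfolding sum_norm_between_powr_eq[OF assms(1,2)] power_integral by (simp add: algebra_simps)
qed

lemma partial_sums_tendsto_zeta_G:
  assumes "1 < Re s"
  shows "((\<lambda>Y. \<Sum>g | nrm g \<le> Y. complex_of_real (nrm g) powr (- s)) \<longlongrightarrow> zeta_G nrm s) at_top"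
proof -
  have "((\<lambda>g. complex_of_real (nrm g) powr (- s)) has_sum zeta_G nrm s) UNIV"
    unfolding zeta_G_def using summable_on_norm_powr[OF assms] by (rule has_sum_infsum)
  from filterlim_compose[OF this[unfolded has_sum_def] norm_le_tendsto_finite_subsets]
  show ?thesis
    by simp
qed

lemma count_mult_powr_tendsto_0:
  assumes "1 < Re s"
  shows "((\<lambda>Y. complex_of_real (N Y) * complex_of_real Y powr (- s)) \<longlongrightarrow> 0) at_top"
proof (rule Lim_null_comparison)
  show "\<forall>\<^sub>F Y in at_top. norm (complex_of_real (N Y) * complex_of_real Y powr (- s))
                           \<le> count_slope * Y powr (1 - Re s)"
    using eventually_gt_at_top[of 0] by eventually_elim (rule norm_count_mult_powr_le)
  show "((\<lambda>Y. count_slope * Y powr (1 - Re s)) \<longlongrightarrow> 0) at_top"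
    using assms by (intro tendsto_mult_right_zero tendsto_neg_powr filterlim_ident) auto
qed

section \<open>The zeta function on the line Re s = 1\<close>

definition zeta_expansion :: "real \<Rightarrow> complex \<Rightarrow> complex" where
  "zeta_expansion X s =
     (\<Sum>g | nrm g \<le> X. complex_of_real (nrm g) powr (- s))
     - complex_of_real (N X) * complex_of_real X powr (- s)
     + complex_of_real A * s * complex_of_real X powr (1 - s) / (s - 1)
     + (LINT x:{X..}|lborel. complex_of_real (R x) * (s * complex_of_real x powr (- s - 1)))"

lemma zeta_G_eq_zeta_expansion:
  assumes "1 < Re s" "x0 \<le> X"
  shows "zeta_G nrm s = zeta_expansion X s"
proof -
  have X: "0 < X"
    using assms(2) x0_ge_3 by simp
  have s: "s \<noteq> 1"
    using assms(1) by auto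
  define E where "E Y =
      (\<Sum>g | nrm g \<le> X. complex_of_real (nrm g) powr (- s))
      + complex_of_real (N Y) * complex_of_real Y powr (- s)
      - complex_of_real (N X) * complex_of_real X powr (- s)
      + complex_of_real A * s * (complex_of_real X powr (1 - s) - complex_of_real Y powr (1 - s)) / (s - 1)
      + (LINT x:{X..Y}|lborel. complex_of_real (R x) * (s * complex_of_real x powr (- s - 1)))" for Y
  have "\<forall>\<^sub>F Y in at_top. (\<Sum>g | nrm g \<le> Y. complex_of_real (nrm g) powr (- s)) = E Y"
    using eventually_ge_at_top[of X]
    by eventually_elim (simp add: E_def sum_norm_le_split sum_norm_between_powr_remainder_eq X s)
  with partial_sums_tendsto_zeta_G[OF assms(1)] have "(E \<longlongrightarrow> zeta_G nrm s) at_top"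
    by (rule Lim_transform_eventually)
  moreover have "(E \<longlongrightarrow> zeta_expansion X s) at_top"
  proof -
    have "((\<lambda>Y. LINT x:{X..Y}|lborel. complex_of_real (R x) * (s * complex_of_real x powr (- s - 1)))
            \<longlongrightarrow> (LINT x:{X..}|lborel. complex_of_real (R x) * (s * complex_of_real x powr (- s - 1)))) at_top"
      using assms by (intro tendsto_set_lebesgue_integral_at_top remainder_tail_integral(1)) auto
    moreover have "((\<lambda>Y. complex_of_real Y powr (1 - s)) \<longlongrightarrow> 0) at_top"
      using assms(1) by (intro tendsto_neg_powr_complex_of_real filterlim_ident) auto
    ultimately have "(E \<longlongrightarrow>
        (\<Sum>g | nrm g \<le> X. complex_of_real (nrm g) powr (- s)) + 0
        - complex_of_real (N X) * complex_of_real X powr (- s)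
        + complex_of_real A * s * (complex_of_real X powr (1 - s) - 0) / (s - 1)
        + (LINT x:{X..}|lborel. complex_of_real (R x) * (s * complex_of_real x powr (- s - 1)))) at_top"
      unfolding E_def using s by (intro tendsto_intros count_mult_powr_tendsto_0[OF assms(1)]) auto
    then show ?thesis
      by (simp add: zeta_expansion_def)
  qed
  ultimately show ?thesis
    by (rule tendsto_unique[OF trivial_limit_at_top_linorder])
qed

lemma remainder_tail_tendsto_at_right:
  assumes "x0 \<le> X"
  shows "((\<lambda>\<sigma>. LINT x:{X..}|lborel. complex_of_real (R x) * (Complex \<sigma> t * complex_of_real x powr (- Complex \<sigma> t - 1)))
           \<longlongrightarrow> (LINT x:{X..}|lborel. complex_of_real (R x) * (Complex 1 t * complex_of_real x powr (- Complex 1 t - 1))))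
         (at_right 1)"
proof (rule tendsto_at_right_sequentially[of 1 2])
  define f where "f \<sigma> x = indicator {X..} x *\<^sub>R
      (complex_of_real (R x) * (Complex \<sigma> t * complex_of_real x powr (- Complex \<sigma> t - 1)))" for \<sigma> x
  define w where "w x = indicator {X..} x *\<^sub>R ((2 + \<bar>t\<bar>) * C * (1 / (x * ln x powr \<gamma>)))" for x
  have f_meas: "f \<sigma> \<in> borel_measurable borel" for \<sigma>
    unfolding f_def by measurable
  have X: "1 < X"
    using assms x0_ge_3 by simp
  have w_int: "integrable lborel w"
    unfolding w_def set_integrable_def[symmetric]
    by (rule set_integrable_mult_right[OF set_integral_inverse_mult_ln_powr(1)[OF gamma_gt_1 X]])
  have dominated: "norm (f \<sigma> x) \<le> w x" if "1 < \<sigma>" "\<sigma> < 2" for \<sigma> x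
  proof (cases "X \<le> x")
    case True
    have "norm (f \<sigma> x) \<le> norm (Complex \<sigma> t) * C * (1 / (x * ln x powr \<gamma>))"
      using norm_remainder_integrand_le[of x "Complex \<sigma> t"] True assms that(1) unfolding f_def by simp
    also have "\<dots> \<le> (2 + \<bar>t\<bar>) * C * (1 / (x * ln x powr \<gamma>))"
      using cmod_le[of "Complex \<sigma> t"] that True X C_nonneg by (intro mult_right_mono) auto
    also have "\<dots> = w x"
      unfolding w_def using True by simp
    finally show ?thesis .
  qed (simp add: f_def w_def)
  have pointwise: "(\<lambda>n. f (S n) x) \<longlonglongrightarrow> f 1 x" if "S \<longlonglongrightarrow> 1" for S x
  proof (cases "X \<le> x")
    case True
    with X have "complex_of_real x \<notin> \<real>\<^sub>\<le>\<^sub>0"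
      by (simp add: complex_nonpos_Reals_iff)
    then show ?thesis
      unfolding f_def using that by (intro tendsto_intros) auto
  qed (simp add: f_def)
  fix S :: "nat \<Rightarrow> real"
  assume S: "\<And>n. 1 < S n" "\<And>n. S n < 2" "decseq S" "S \<longlonglongrightarrow> 1"
  have "(\<lambda>n. integral\<^sup>L lborel (f (S n))) \<longlonglongrightarrow> integral\<^sup>L lborel (f 1)"
    using f_meas w_int dominated pointwise S by (intro integral_dominated_convergence[where w = w]) auto
  then show "(\<lambda>n. LINT x:{X..}|lborel. complex_of_real (R x) * (Complex (S n) t * complex_of_real x powr (- Complex (S n) t - 1)))
               \<longlonglongrightarrow> (LINT x:{X..}|lborel. complex_of_real (R x) * (Complex 1 t * complex_of_real x powr (- Complex 1 t - 1)))"
    unfolding f_def set_lebesgue_integral_def .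
qed simp

lemma zeta_G_line_eq_zeta_expansion:
  assumes "t \<noteq> 0" "x0 \<le> X"
  shows "zeta_G_line nrm t = zeta_expansion X (Complex 1 t)"
proof -
  have "0 < X"
    using assms(2) x0_ge_3 by simp
  then have "complex_of_real X \<notin> \<real>\<^sub>\<le>\<^sub>0"
    by (simp add: complex_nonpos_Reals_iff)
  moreover have "complex_of_real (nrm g) \<notin> \<real>\<^sub>\<le>\<^sub>0" for g
    using norm_pos[of g] by (simp add: complex_nonpos_Reals_iff)
  moreover have "Complex 1 t - 1 \<noteq> 0"
    using assms(1) by (simp add: complex_eq_iff)
  ultimately have "((\<lambda>\<sigma>. zeta_expansion X (Complex \<sigma> t)) \<longlongrightarrow> zeta_expansion X (Complex 1 t)) (at_right 1)"
    unfolding zeta_expansion_def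
    by (intro tendsto_intros remainder_tail_tendsto_at_right[OF assms(2)]) auto
  moreover have "\<forall>\<^sub>F \<sigma> in at_right 1. zeta_expansion X (Complex \<sigma> t) = zeta_G nrm (Complex \<sigma> t)"
    using eventually_at_right_less[of 1] by eventually_elim (simp add: zeta_G_eq_zeta_expansion[OF _ assms(2)])
  ultimately have "((\<lambda>\<sigma>. zeta_G nrm (Complex \<sigma> t)) \<longlongrightarrow> zeta_expansion X (Complex 1 t)) (at_right 1)"
    by (rule Lim_transform_eventually)
  then show ?thesis
    unfolding zeta_G_line_def by (intro tendsto_Lim) auto
qed

lemma norm_partial_zeta_line_le:
  assumes "1 \<le> X" "Re s = 1"
  shows "norm (\<Sum>g | nrm g \<le> X. complex_of_real (nrm g) powr (- s))
           \<le> 2 * N 1 + count_slope + count_slope * ln X"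
proof -
  have "norm (\<Sum>g | nrm g \<le> X. complex_of_real (nrm g) powr (- s))
          \<le> (\<Sum>g | nrm g \<le> X. norm (complex_of_real (nrm g) powr (- s)))"
    by (rule norm_sum)
  also have "\<dots> = (\<Sum>g | nrm g \<le> X. nrm g powr (- 1))"
    using norm_pos assms(2) by (intro sum.cong refl) (simp add: less_imp_le norm_of_real_powr)
  also have "\<dots> \<le> 2 * N 1 + count_slope + count_slope * 1 * (LINT x:{1..X}|lborel. x powr (- 1))"
    using sum_norm_le_powr_le[of 1 X] assms(1) by simp
  also have "(LINT x:{1..X}|lborel. x powr (- 1)) = ln X"
    using set_integral_inverse_Icc[of 1 X] assms(1) by simp
  finally show ?thesis
    by simp
qed

lemma norm_pole_term_line_le:
  assumes "1 \<le> t" "0 < X"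
  shows "norm (complex_of_real A * Complex 1 t * complex_of_real X powr (1 - Complex 1 t) / (Complex 1 t - 1))
           \<le> 2 * \<bar>A\<bar>"
proof -
  have "norm (complex_of_real X powr (1 - Complex 1 t)) = 1"
    using assms(2) by (simp add: norm_of_real_powr)
  moreover have "norm (Complex 1 t - 1) = t"
    using assms(1) by (simp add: cmod_def)
  ultimately have "norm (complex_of_real A * Complex 1 t * complex_of_real X powr (1 - Complex 1 t) / (Complex 1 t - 1))
                     = \<bar>A\<bar> * norm (Complex 1 t) / t"
    by (simp add: norm_mult norm_divide)
  also have "\<dots> \<le> \<bar>A\<bar> * (2 * t) / t"
    using cmod_le[of "Complex 1 t"] assms(1) by (intro divide_right_mono mult_left_mono) auto
  also have "\<dots> = 2 * \<bar>A\<bar>"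
    using assms(1) by simp
  finally show ?thesis .
qed

lemma norm_zeta_expansion_line_le:
  assumes "1 \<le> t" "x0 \<le> X"
  shows "norm (zeta_expansion X (Complex 1 t))
           \<le> 2 * N 1 + 2 * count_slope + 2 * \<bar>A\<bar> + count_slope * ln X
             + 2 * C / (\<gamma> - 1) * (t * ln X powr (1 - \<gamma>))"
proof -
  define s where "s = Complex 1 t"
  have X: "1 \<le> X" "0 < X"
    using assms(2) x0_ge_3 by auto
  have Re_s: "Re s = 1"
    unfolding s_def by simp
  have norm_s: "norm s \<le> 2 * t"
    using cmod_le[of s] assms(1) unfolding s_def by simp
  have head: "norm (\<Sum>g | nrm g \<le> X. complex_of_real (nrm g) powr (- s))
                \<le> 2 * N 1 + count_slope + count_slope * ln X"
    using X(1) Re_s by (rule norm_partial_zeta_line_le)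
  have boundary: "norm (complex_of_real (N X) * complex_of_real X powr (- s)) \<le> count_slope"
    using X(1) Re_s by (intro norm_count_mult_powr_le_slope) simp_all
  have pole: "norm (complex_of_real A * s * complex_of_real X powr (1 - s) / (s - 1)) \<le> 2 * \<bar>A\<bar>"
    unfolding s_def using assms(1) X(2) by (rule norm_pole_term_line_le)
  have tail: "norm (LINT x:{X..}|lborel. complex_of_real (R x) * (s * complex_of_real x powr (- s - 1)))
                \<le> 2 * C / (\<gamma> - 1) * (t * ln X powr (1 - \<gamma>))"
  proof -
    have "norm (LINT x:{X..}|lborel. complex_of_real (R x) * (s * complex_of_real x powr (- s - 1)))
            \<le> norm s * C * (ln X powr (1 - \<gamma>) / (\<gamma> - 1))"
      using remainder_tail_integral(2)[OF assms(2)] Re_s by simp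
    also have "\<dots> \<le> (2 * t) * C * (ln X powr (1 - \<gamma>) / (\<gamma> - 1))"
      using norm_s C_nonneg gamma_gt_1 by (intro mult_right_mono) auto
    also have "\<dots> = 2 * C / (\<gamma> - 1) * (t * ln X powr (1 - \<gamma>))"
      by simp
    finally show ?thesis .
  qed
  have "norm (zeta_expansion X s)
          \<le> norm (\<Sum>g | nrm g \<le> X. complex_of_real (nrm g) powr (- s))
            + norm (complex_of_real (N X) * complex_of_real X powr (- s))
            + norm (complex_of_real A * s * complex_of_real X powr (1 - s) / (s - 1))
            + norm (LINT x:{X..}|lborel. complex_of_real (R x) * (s * complex_of_real x powr (- s - 1)))"
    unfolding zeta_expansion_def
    by (intro order.trans[OF norm_triangle_ineq] add_right_mono order.trans[OF norm_triangle_ineq4]) auto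
  then show ?thesis
    using head boundary pole tail unfolding s_def by linarith
qed

theorem zeta_G_line_bigo: "(\<lambda>t. norm (zeta_G_line nrm t)) \<in> O(\<lambda>t. t powr (1 / \<gamma>))"
proof (rule bigoI)
  define K where "K = 2 * N 1 + 2 * count_slope + 2 * \<bar>A\<bar>"
  show "\<forall>\<^sub>F t in at_top. norm (norm (zeta_G_line nrm t))
                         \<le> (K + count_slope + 2 * C / (\<gamma> - 1)) * norm (t powr (1 / \<gamma>))"
    using eventually_ge_at_top[of "max 1 (ln x0 powr \<gamma>)"]
  proof eventually_elim
    case (elim t)
    then have t: "1 \<le> t" "ln x0 powr \<gamma> \<le> t"
      by auto
    define X where "X = exp (t powr (1 / \<gamma>))"
    have ln_X: "ln X = t powr (1 / \<gamma>)"
      unfolding X_def by simp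
    have "ln x0 = (ln x0 powr \<gamma>) powr (1 / \<gamma>)"
      using x0_ge_3 gamma_gt_1 by (simp add: powr_powr)
    also have "\<dots> \<le> t powr (1 / \<gamma>)"
      using t(2) gamma_gt_1 by (intro powr_mono2) auto
    finally have X: "x0 \<le> X"
      unfolding X_def using x0_ge_3 by (subst ln_le_cancel_iff[symmetric]) auto
    have "t * (t powr (1 / \<gamma>)) powr (1 - \<gamma>) = t powr (1 + (1 - \<gamma>) / \<gamma>)"
      using t(1) by (simp add: powr_powr powr_add)
    also have "1 + (1 - \<gamma>) / \<gamma> = 1 / \<gamma>"
      using gamma_gt_1 by (simp add: field_simps)
    finally have balance: "t * (t powr (1 / \<gamma>)) powr (1 - \<gamma>) = t powr (1 / \<gamma>)" .
    have "norm (zeta_G_line nrm t) \<le> K + count_slope * t powr (1 / \<gamma>) + 2 * C / (\<gamma> - 1) * t powr (1 / \<gamma>)"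
      using norm_zeta_expansion_line_le[OF t(1) X] zeta_G_line_eq_zeta_expansion[OF _ X] t(1)
      unfolding K_def ln_X balance by simp
    also have "K \<le> K * t powr (1 / \<gamma>)"
      unfolding K_def using t(1) gamma_gt_1 count_nonneg[of 1] count_slope_nonneg
      by (intro mult_le_cancel_left1[THEN iffD2]) (auto simp: ge_one_powr_ge_zero)
    finally show ?case
      by (simp add: algebra_simps)
  qed
qed

end

lemma arith_semigroup_imp_norm_counting:
  "arith_semigroup nrm \<Longrightarrow> norm_counting nrm"
  unfolding arith_semigroup_def by unfold_locales auto

lemma bigo_x_div_ln_powrE:
  fixes f :: "real \<Rightarrow> real"
  assumes "f \<in> O(\<lambda>x. x / ln x powr \<gamma>)"
  obtains C x0 where "0 \<le> C" "3 \<le> x0" "\<And>x. x0 \<le> x \<Longrightarrow> \<bar>f x\<bar> \<le> C * x / ln x powr \<gamma>"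
proof -
  from assms obtain C where "C > 0" "\<forall>\<^sub>F x in at_top. norm (f x) \<le> C * norm (x / ln x powr \<gamma>)"
    by (rule landau_o.bigE)
  then obtain x1 where x1: "\<And>x. x1 \<le> x \<Longrightarrow> \<bar>f x\<bar> \<le> C * \<bar>x / ln x powr \<gamma>\<bar>"
    by (auto simp: eventually_at_top_linorder)
  have "\<bar>f x\<bar> \<le> C * x / ln x powr \<gamma>" if "max 3 x1 \<le> x" for x
    using x1[of x] that by simp
  with \<open>C > 0\<close> show ?thesis
    by (intro that[of C "max 3 x1"]) auto
qed

theorem mainTheorem8:
  fixes nrm :: "'a::comm_monoid_mult \<Rightarrow> real" and A \<gamma> :: real
  assumes "arith_semigroup nrm"
    and "1 < \<gamma>" and "\<gamma> \<le> 2"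
    and "(\<lambda>x. count_G nrm x - A * x) \<in> O(\<lambda>x. x / (ln x) powr \<gamma>)"
  shows "(\<gamma> < 2 \<longrightarrow> (\<lambda>t. norm (zeta_G_line nrm t)) \<in> O(\<lambda>t. t powr (1 / \<gamma>)))
       \<and> (\<gamma> = 2 \<longrightarrow> (\<lambda>t. norm (zeta_G_line nrm t)) \<in> O(\<lambda>t. sqrt (t * ln t)))"
proof -
  interpret norm_counting nrm
    using assms(1) by (rule arith_semigroup_imp_norm_counting)
  obtain C x0 where "0 \<le> C" "3 \<le> x0" "\<And>x. x0 \<le> x \<Longrightarrow> \<bar>count_G nrm x - A * x\<bar> \<le> C * x / ln x powr \<gamma>"
    using bigo_x_div_ln_powrE[OF assms(4)] by blast
  with assms(2) interpret count_asymptotics nrm A C \<gamma> x0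
    by unfold_locales auto
  have "(\<lambda>t. t powr (1 / \<gamma>)) \<in> O(\<lambda>t. sqrt (t * ln t))" if "\<gamma> = 2"
    unfolding that by real_asymp
  then show ?thesis
    using zeta_G_line_bigo landau_o.big_trans by blast
qed

end
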